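(* Let $G$ be an $(N,k)$ Adinkra obtained from an $N$-cube Adinkra by quotienting by a doubly even $(N,k)$ code $C$ (vertices labeled by cosets $x+C$). Let $\phi$ be a single orbit of the automorphism group of $G$ disregarding vertex coloring, and let $c\in\mathbb{Z}_2^N$. If $\langle x,c\rangle \pmod 2$ takes the same value for all $x\in\mathbb{Z}_2^N$ with $x+C\in\phi$, then $c\in C$.
   Context: An Adinkra of dimension $N$ is a finite connected simple graph $G=(V,E)$ with: a bipartition of $V$ into bosons and fermions (every edge joins a boson and a fermion); a height function $\mathrm{hgt}:V\to\mathbb{Z}$ with adjacent vertices at heights differing by $1$; a coloring of $E$ by colors $\{1,\dots,N\}$ such that each vertex is incident to exactly one edge of each color; an edge parity $\pi:E\to\mathbb{Z}_2$ (parity $1$ = dashed); such that every path with edge colors $(i,j)$, $i\ne j$, lies in a unique 4-cycle with colors $(i,j,i,j)$, each having an odd number of dashed edges. If $|V|=2^{N-k}$, $G$ is an $(N,k)$ Adinkra. Switching a vertex reverses the parity of its incident edges. A doubly even $(N,k)$ code $C$ is a $k$-dimensional subspace of $\mathbb{Z}_2^N$ all of whose elements have weight $\equiv0\pmod4$; $\langle u,v\rangle=\sum_i u_iv_i \bmod 2$. Quotient construction: label the vertices of an $N$-cube Adinkra by $\mathbb{Z}_2^N$ so that color-$i$ edges join $v$ and $v+e_i$, and identify vertices whose labels differ by elements of $C$; the result has vertices $x+C$ with color-$i$ edges joining $x+C$ and $x+e_i+C$. An automorphism disregarding vertex coloring is a permutation of $V$ preserving adjacency and edge colors (ignoring heights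 and bipartition) which becomes parity-preserving after switching some set of vertices. *)

theory Defs
  imports Main
begin

text \<open>Vectors of Z_2^N are represented as subsets of {..<N} (the support);
addition is symmetric difference, weight is cardinality.\<close>

definition vadd :: "nat set \<Rightarrow> nat set \<Rightarrow> nat set" where
  "vadd a b = (a - b) \<union> (b - a)"

definition vinner :: "nat set \<Rightarrow> nat set \<Rightarrow> bool" where
  "vinner a b = odd (card (a \<inter> b))"

definition doubly_even_code :: "nat \<Rightarrow> nat \<Rightarrow> nat set set \<Rightarrow> bool" where
  "doubly_even_code N k C \<longleftrightarrow>
     C \<subseteq> Pow {..<N} \<and> {} \<in> C \<and> (\<forall>a\<in>C. \<forall>b\<in>C. vadd a b \<in> C) \<and>
     card C = 2 ^ k \<and> (\<forall>a\<in>C. card a mod 4 = 0)"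

definition coset :: "nat set set \<Rightarrow> nat set \<Rightarrow> nat set set" where
  "coset C x = (\<lambda>c. vadd x c) ` C"

definition qverts :: "nat \<Rightarrow> nat set set \<Rightarrow> nat set set set" where
  "qverts N C = coset C ` Pow {..<N}"

definition nbr :: "nat set set \<Rightarrow> nat \<Rightarrow> nat set set" where
  "nbr u i = (\<lambda>y. vadd y {i}) ` u"

definition qedge :: "nat \<Rightarrow> nat set set \<Rightarrow> nat set set \<Rightarrow> nat set set \<Rightarrow> nat \<Rightarrow> bool" where
  "qedge N C u v i \<longleftrightarrow> u \<in> qverts N C \<and> i < N \<and> v = nbr u i"

text \<open>Edge parity is given as a function of (vertex, color), required to be
well defined on edges (same value at both endpoints).\<close>
definition quotient_adinkra ::
  "nat \<Rightarrow> nat set set \<Rightarrow> (nat set set \<Rightarrow> nat \<Rightarrow> bool) \<Rightarrow> (nat set set \<Rightarrow> int)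
   \<Rightarrow> (nat set set \<Rightarrow> bool) \<Rightarrow> bool" where
  "quotient_adinkra N C par hgt boson \<longleftrightarrow>
     (\<forall>u\<in>qverts N C. \<forall>i<N. par (nbr u i) i = par u i) \<and>
     (\<forall>u\<in>qverts N C. \<forall>i<N. boson (nbr u i) \<noteq> boson u) \<and>
     (\<forall>u\<in>qverts N C. \<forall>i<N. hgt (nbr u i) = hgt u + 1 \<or> hgt (nbr u i) = hgt u - 1) \<and>
     (\<forall>u\<in>qverts N C. \<forall>i<N. \<forall>j<N. i \<noteq> j \<longrightarrow>
        odd (of_bool (par u i) + of_bool (par (nbr u i) j) + of_bool (par (nbr u j) i)
             + of_bool (par u j) :: nat))"

text \<open>Automorphism disregarding vertex coloring: a permutation of the vertices
preserving colored adjacency which becomes parity preserving after switching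
some set S of vertices.\<close>
definition aut_dvc ::
  "nat \<Rightarrow> nat set set \<Rightarrow> (nat set set \<Rightarrow> nat \<Rightarrow> bool)
   \<Rightarrow> (nat set set \<Rightarrow> nat set set) \<Rightarrow> bool" where
  "aut_dvc N C par \<sigma> \<longleftrightarrow>
     bij_betw \<sigma> (qverts N C) (qverts N C) \<and>
     (\<forall>u\<in>qverts N C. \<forall>v\<in>qverts N C. \<forall>i.
        qedge N C u v i \<longleftrightarrow> qedge N C (\<sigma> u) (\<sigma> v) i) \<and>
     (\<exists>S \<subseteq> qverts N C. \<forall>u\<in>qverts N C. \<forall>i<N.
        par (\<sigma> u) i = (par u i \<noteq> ((u \<in> S) \<noteq> (nbr u i \<in> S))))"

definition aut_orbit ::
  "nat \<Rightarrow> nat set set \<Rightarrow> (nat set set \<Rightarrow> nat \<Rightarrow> bool) \<Rightarrow> nat set set \<Rightarrow> nat set set set" where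
  "aut_orbit N C par u = {\<sigma> u | \<sigma>. aut_dvc N C par \<sigma>}"

end

theory Submission
  imports Defs
begin

text \<open>For a word \<open>a\<close> orthogonal to \<open>C\<close>, the translation \<open>x + C \<mapsto> x + a + C\<close> preserves
the coloured edges of the quotient, and it preserves the dashing up to switching. To see
this, lift the dashing to the cube: its difference from the standard cube dashing is closed
(every coloured square has an even number of changes), hence the coboundary of a potential
\<open>g\<close>. Switching at \<open>g(x + a) + g(x) + s\<^sub>a(x)\<close>, where \<open>s\<^sub>a\<close> carries the standard dashing to
its translate by \<open>a\<close>, turns the dashing into its translate; this switching function is
\<open>C\<close>-periodic because codewords have even weight and are orthogonal to \<open>a\<close>, so it
descends to the quotient. Thus the orbit of \<open>x\<^sub>0 + C\<close> contains \<open>x\<^sub>0 + a + C\<close> for all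
\<open>a \<in> C\<^sup>\<bottom>\<close>, and if \<open>c \<notin> C = C\<^sup>\<bottom>\<^sup>\<bottom>\<close> some such \<open>a\<close> has \<open>\<langle>a, c\<rangle> = 1\<close>, so \<open>\<langle>x, c\<rangle>\<close>
is not constant on the orbit.\<close>

section \<open>Binary vectors\<close>

lemma vadd_comm: "vadd a b = vadd b a"
  by (auto simp: vadd_def)

lemma vadd_assoc: "vadd (vadd a b) c = vadd a (vadd b c)"
  by (auto simp: vadd_def)

lemma vadd_cancel [simp]: "vadd (vadd a b) b = a"
  by (auto simp: vadd_def)

lemma vadd_empty [simp]: "vadd a {} = a" "vadd {} a = a"
  by (auto simp: vadd_def)

lemma vadd_subset: "a \<subseteq> I \<Longrightarrow> b \<subseteq> I \<Longrightarrow> vadd a b \<subseteq> I"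
  by (auto simp: vadd_def)

lemma finite_vadd [simp]: "finite a \<Longrightarrow> finite b \<Longrightarrow> finite (vadd a b)"
  by (simp add: vadd_def)

lemma vadd_Int: "vadd a b \<inter> c = vadd (a \<inter> c) (b \<inter> c)"
  by (auto simp: vadd_def)

lemma vadd_insert: "i \<notin> a \<Longrightarrow> vadd a {i} = insert i a"
  by (auto simp: vadd_def)

lemma odd_sum_vadd:
  fixes f :: "nat \<Rightarrow> nat"
  assumes "finite A" "finite B"
  shows "odd (sum f (vadd A B)) = (odd (sum f A) \<noteq> odd (sum f B))"
proof -
  have "sum f (vadd A B) = sum f (A - B) + sum f (B - A)"
    unfolding vadd_def using assms by (intro sum.union_disjoint) auto
  moreover have "sum f A = sum f (A \<inter> B) + sum f (A - B)"
    using sum.Int_Diff[OF assms(1)] .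
  moreover have "sum f B = sum f (A \<inter> B) + sum f (B - A)"
    using sum.Int_Diff[OF assms(2), of f A] by (simp add: Int_commute)
  ultimately show ?thesis by presburger
qed

lemma odd_card_vadd:
  "finite A \<Longrightarrow> finite B \<Longrightarrow> odd (card (vadd A B)) = (odd (card A) \<noteq> odd (card B))"
  using odd_sum_vadd[of A B "\<lambda>_. 1"] by simp

lemma vinner_sym: "vinner a b = vinner b a"
  by (simp add: vinner_def Int_commute)

lemma vinner_vadd_left:
  "finite p \<Longrightarrow> finite q \<Longrightarrow> vinner (vadd p q) r = (vinner p r \<noteq> vinner q r)"
  unfolding vinner_def vadd_Int by (simp add: odd_card_vadd)

lemma vinner_vadd_right:
  "finite p \<Longrightarrow> finite q \<Longrightarrow> vinner r (vadd p q) = (vinner r p \<noteq> vinner r q)"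
  using vinner_vadd_left vinner_sym by metis

lemma vinner_empty [simp]: "\<not> vinner {} a"
  by (simp add: vinner_def)

lemma vinner_singleton: "vinner {n} y = (n \<in> y)"
  by (cases "n \<in> y") (auto simp: vinner_def)

section \<open>Dual codes\<close>

text \<open>The extension adds \<open>e\<^sub>n\<close> exactly when \<open>a'\<close> is not orthogonal to \<open>w\<^sub>0\<close>.\<close>

lemma dual_extend_over_coordinate:
  assumes closed: "\<forall>a\<in>C. \<forall>b\<in>C. vadd a b \<in> C" and fin: "\<forall>w\<in>C. finite w"
    and w0: "w0 \<in> C" "n \<in> w0" and fa': "finite a'"
    and perp: "\<forall>w\<in>C. n \<notin> w \<longrightarrow> \<not> vinner a' w"
  obtains a where "a \<subseteq> insert n a'" "\<forall>w\<in>C. \<not> vinner a w"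
    "\<And>y. finite y \<Longrightarrow> vinner a y = vinner a' (if n \<in> y then vadd y w0 else y)"
proof
  define a where "a = vadd a' (if vinner a' w0 then {n} else {})"
  have a_inner: "vinner a y = (vinner a' y \<noteq> (vinner a' w0 \<and> n \<in> y))" for y
    unfolding a_def using vinner_vadd_left[OF fa', of _ y]
    by (simp add: vinner_singleton)
  show "a \<subseteq> insert n a'"
    by (auto simp: a_def vadd_def)
  show clear: "vinner a y = vinner a' (if n \<in> y then vadd y w0 else y)" if "finite y" for y
  proof (cases "n \<in> y")
    case True
    have "n \<notin> vadd y w0"
      using True w0(2) by (simp add: vadd_def)
    moreover have "vinner a y = (vinner a (vadd y w0) \<noteq> vinner a w0)"
      using vinner_vadd_right[of "vadd y w0" w0 a] that fin w0(1) by simp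
    ultimately show ?thesis
      using True a_inner w0(2) by simp
  qed (use a_inner in simp)
  show "\<forall>w\<in>C. \<not> vinner a w"
  proof
    fix w assume w: "w \<in> C"
    have "vadd w w0 \<in> C" "n \<in> w \<Longrightarrow> n \<notin> vadd w w0"
      using closed w w0 by (auto simp: vadd_def)
    then show "\<not> vinner a w"
      using clear[of w] fin w perp by (cases "n \<in> w") auto
  qed
qed

lemma vadd_closed_cancel:
  "\<forall>a\<in>C. \<forall>b\<in>C. vadd a b \<in> C \<Longrightarrow> vadd c w \<in> C \<Longrightarrow> w \<in> C \<Longrightarrow> c \<in> C"
  by (metis vadd_cancel)

text \<open>Over \<open>\<int>\<^sub>2\<close> a linear code equals its double dual: a word outside the
code is detected by some dual word.\<close>

lemma exists_dual_not_orthogonal: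
  assumes "finite I" "C \<subseteq> Pow I" "{} \<in> C" "\<forall>a\<in>C. \<forall>b\<in>C. vadd a b \<in> C"
    "c \<subseteq> I" "c \<notin> C"
  shows "\<exists>a\<subseteq>I. (\<forall>w\<in>C. \<not> vinner a w) \<and> vinner a c"
  using assms
proof (induct I arbitrary: C c rule: finite_induct)
  case empty
  then have "c = {}" "C = {{}}" by auto
  with empty.prems(5) show ?case by simp
next
  case (insert n J)
  show ?case
  proof (cases "\<exists>w0\<in>C. n \<in> w0")
    case False
    then have CJ: "C \<subseteq> Pow J"
      using insert.prems(1) by blast
    show ?thesis
    proof (cases "n \<in> c")
      case True
      have "\<forall>w\<in>C. \<not> vinner {n} w" "vinner {n} c"
        using False True by (auto simp: vinner_singleton)
      then show ?thesis
        by blast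
    next
      case False
      then have "c \<subseteq> J"
        using insert.prems(4) by blast
      then show ?thesis
        using insert.hyps(3)[OF CJ insert.prems(2,3) _ insert.prems(5)] by blast
    qed
  next
    case True
    then obtain w0 where w0: "w0 \<in> C" "n \<in> w0" by blast
    have fin: "\<forall>w\<in>C. finite w"
      using insert.prems(1) insert.hyps(1) by (meson Pow_iff finite.insertI finite_subset subsetD)
    define C' where "C' = {w\<in>C. n \<notin> w}"
    define c' where "c' = (if n \<in> c then vadd c w0 else c)"
    have C': "C' \<subseteq> Pow J" "{} \<in> C'" "\<forall>a\<in>C'. \<forall>b\<in>C'. vadd a b \<in> C'"
      using insert.prems(1-3) by (auto simp: C'_def vadd_def)
    have "w0 \<subseteq> insert n J"
      using insert.prems(1) w0(1) by blast
    then have c'J: "c' \<subseteq> J"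
      using insert.prems(4) w0(2) by (auto simp: c'_def vadd_def)
    have "c \<notin> C"
      using insert.prems(5) .
    then have "c' \<notin> C'"
      using insert.prems(3) w0(1) by (auto simp: C'_def c'_def dest: vadd_closed_cancel)
    then obtain a' where a': "a' \<subseteq> J" "\<forall>w\<in>C'. \<not> vinner a' w" "vinner a' c'"
      using insert.hyps(3)[OF C' c'J] by blast
    have "finite a'" "\<forall>w\<in>C. n \<notin> w \<longrightarrow> \<not> vinner a' w"
      using a'(1,2) insert.hyps(1) finite_subset by (auto simp: C'_def)
    then obtain a where a: "a \<subseteq> insert n a'" "\<forall>w\<in>C. \<not> vinner a w"
      "\<And>y. finite y \<Longrightarrow> vinner a y = vinner a' (if n \<in> y then vadd y w0 else y)"
      by (rule dual_extend_over_coordinate[OF insert.prems(3) fin w0]) blast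
    have "finite c"
      using insert.prems(4) insert.hyps(1) finite_subset by blast
    then have "vinner a c"
      using a(3) a'(3) by (simp add: c'_def)
    moreover have "a \<subseteq> insert n J"
      using a(1) a'(1) by blast
    ultimately show ?thesis
      using a(2) by blast
  qed
qed

section \<open>Potentials on the cube\<close>

definition cube_primitive :: "nat \<Rightarrow> (nat set \<Rightarrow> nat \<Rightarrow> bool) \<Rightarrow> (nat set \<Rightarrow> bool) \<Rightarrow> bool" where
  "cube_primitive N D g \<longleftrightarrow> (\<forall>x\<subseteq>{..<N}. \<forall>i<N. g (vadd x {i}) = (g x \<noteq> D x i))"

lemma cube_primitiveD:
  "cube_primitive N D g \<Longrightarrow> x \<subseteq> {..<N} \<Longrightarrow> i < N \<Longrightarrow> g (vadd x {i}) = (g x \<noteq> D x i)"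
  by (simp add: cube_primitive_def)

lemma cube_primitive_xor:
  "cube_primitive N D f \<Longrightarrow> cube_primitive N E h
   \<Longrightarrow> cube_primitive N (\<lambda>x i. D x i \<noteq> E x i) (\<lambda>x. f x \<noteq> h x)"
  by (auto simp: cube_primitive_def)

lemma cube_primitive_translate:
  assumes "cube_primitive N D g" "a \<subseteq> {..<N}"
  shows "cube_primitive N (\<lambda>x. D (vadd x a)) (\<lambda>x. g (vadd x a))"
  unfolding cube_primitive_def
proof (intro allI impI)
  fix x i assume "x \<subseteq> {..<N}" "i < N"
  moreover have "vadd (vadd x {i}) a = vadd (vadd x a) {i}"
    by (auto simp: vadd_def)
  ultimately show "g (vadd (vadd x {i}) a) = (g (vadd x a) \<noteq> D (vadd x a) i)"
    using assms by (simp add: cube_primitiveD vadd_subset)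
qed

lemma cube_primitive_cong:
  "(\<And>x i. x \<subseteq> {..<N} \<Longrightarrow> i < N \<Longrightarrow> D x i = E x i)
   \<Longrightarrow> cube_primitive N D g \<Longrightarrow> cube_primitive N E g"
  by (simp add: cube_primitive_def)

lemma cube_primitive_unique:
  assumes "cube_primitive N D f" "cube_primitive N D h" "x \<subseteq> {..<N}"
  shows "(f x \<noteq> h x) = (f {} \<noteq> h {})"
proof -
  have "finite x"
    using assms(3) finite_subset by blast
  from this assms(3) show ?thesis
  proof (induct x rule: finite_induct)
    case (insert i x)
    then have "insert i x = vadd x {i}" "x \<subseteq> {..<N}" "i < N"
      by (auto simp: vadd_insert)
    then have "f (insert i x) = (f x \<noteq> D x i)" "h (insert i x) = (h x \<noteq> D x i)"
      using assms(1,2) by (simp_all add: cube_primitiveD)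
    then show ?case
      using insert by auto
  qed simp
qed

text \<open>A cochain on the edges of the cube that is invariant under reversing an edge and
sums to zero around every square is the coboundary of the potential obtained by
adding it up along the path that enters the coordinates of \<open>x\<close> in increasing order.\<close>

function cube_potential :: "(nat set \<Rightarrow> nat \<Rightarrow> bool) \<Rightarrow> nat set \<Rightarrow> bool" where
  "cube_potential D x =
     (if x = {} \<or> infinite x then False
      else cube_potential D (x - {Max x}) \<noteq> D (x - {Max x}) (Max x))"
  by auto
termination
  by (relation "measure (\<lambda>(D, x). card x)") (auto simp: card_gt_0_iff)

declare cube_potential.simps [simp del]

lemma cube_potential_insert_Max:
  assumes "finite x" "\<forall>y\<in>x. y < m"
  shows "cube_potential D (insert m x) = (cube_potential D x \<noteq> D x m)"
proof -
  have "Max (insert m x) = m" "insert m x - {m} = x"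
    using assms by (auto intro!: Max_eqI)
  then show ?thesis
    using assms by (subst cube_potential.simps) auto
qed

lemma cube_primitive_cube_potential:
  assumes reverse: "\<forall>y\<subseteq>{..<N}. \<forall>i<N. D (vadd y {i}) i = D y i"
    and square: "\<forall>y\<subseteq>{..<N}. \<forall>i<N. \<forall>j<N. i \<noteq> j \<longrightarrow>
      (D y i \<noteq> D (vadd y {i}) j) = (D (vadd y {j}) i \<noteq> D y j)"
  shows "cube_primitive N D (cube_potential D)"
  unfolding cube_primitive_def
proof (intro allI impI)
  fix x i assume x: "x \<subseteq> {..<N}" and i: "i < N"
  have "finite x"
    using x finite_subset by blast
  from this x show "cube_potential D (vadd x {i}) = (cube_potential D x \<noteq> D x i)"
  proof (induct x rule: finite_linorder_max_induct)
    case empty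
    show ?case
      using cube_potential_insert_Max[of "{}" i D] by (simp add: vadd_insert)
  next
    case (insert m x)
    have x: "x \<subseteq> {..<N}" "m < N" "\<forall>y\<in>x. y < m"
      using insert by auto
    have pot_mx: "cube_potential D (insert m x) = (cube_potential D x \<noteq> D x m)"
      using insert by (simp add: cube_potential_insert_Max)
    consider "i = m" | "m < i" | "i < m" by linarith
    then show ?case
    proof cases
      case 1
      then have "vadd (insert m x) {i} = x" "insert m x = vadd x {m}"
        using x by (auto simp: vadd_def)
      then show ?thesis
        using pot_mx reverse x 1 by metis
    next
      case 2
      then have "vadd (insert m x) {i} = insert i (insert m x)"
        using x by (auto simp: vadd_def)
      moreover have "cube_potential D (insert i (insert m x))
          = (cube_potential D (insert m x) \<noteq> D (insert m x) i)"
        using 2 insert by (intro cube_potential_insert_Max) auto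
      ultimately show ?thesis
        by simp
    next
      case 3
      \<comment> \<open>the new coordinate \<open>i\<close> is entered before \<open>m\<close>: commute them around a square\<close>
      have v: "vadd (insert m x) {i} = insert m (vadd x {i})" "insert m x = vadd x {m}"
        using 3 x by (auto simp: vadd_def)
      have "\<forall>y\<in>vadd x {i}. y < m"
        using 3 insert by (auto simp: vadd_def)
      then have "cube_potential D (vadd (insert m x) {i})
                   = (cube_potential D (vadd x {i}) \<noteq> D (vadd x {i}) m)"
        unfolding v(1) using insert by (simp add: cube_potential_insert_Max)
      moreover have "(D x i \<noteq> D (vadd x {i}) m) = (D (vadd x {m}) i \<noteq> D x m)"
        using square x i 3 by auto
      ultimately show ?thesis
        using insert x pot_mx v(2) by auto
    qed
  qed
qed

text \<open>The dashing of the \<open>N\<close>-cube Adinkra: the colour-\<open>i\<close> edge at \<open>x\<close> is dashed iff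
\<open>x\<close> has an odd number of coordinates below \<open>i\<close>.\<close>

definition std_dashing :: "nat set \<Rightarrow> nat \<Rightarrow> bool" where
  "std_dashing x i = odd (card (x \<inter> {..<i}))"

lemma std_dashing_vadd: "std_dashing (vadd x b) i = (std_dashing x i \<noteq> std_dashing b i)"
  unfolding std_dashing_def vadd_Int by (simp add: odd_card_vadd)

lemma std_dashing_singleton: "std_dashing {j} i = (j < i)"
  by (cases "j < i") (simp_all add: std_dashing_def)

definition std_switch :: "nat set \<Rightarrow> nat set \<Rightarrow> bool" where
  "std_switch w x = odd (\<Sum>i\<in>x. card (w \<inter> {..<i}))"

lemma std_switch_empty [simp]: "std_switch w {} = False"
  by (simp add: std_switch_def)

lemma std_switch_vadd:
  "finite x \<Longrightarrow> finite a \<Longrightarrow> std_switch w (vadd x a) = (std_switch w x \<noteq> std_switch w a)"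
  unfolding std_switch_def by (rule odd_sum_vadd)

lemma std_switch_singleton: "std_switch w {i} = std_dashing w i"
  by (simp add: std_switch_def std_dashing_def)

text \<open>Switching the cube at \<open>std_switch w\<close> turns the standard dashing into its
translate by \<open>w\<close>.\<close>

lemma cube_primitive_std_switch: "cube_primitive N (\<lambda>_. std_dashing w) (std_switch w)"
  unfolding cube_primitive_def
proof (intro allI impI)
  fix x i assume "x \<subseteq> {..<N}"
  then have "finite x"
    by (rule finite_subset) simp
  then show "std_switch w (vadd x {i}) = (std_switch w x \<noteq> std_dashing w i)"
    by (simp add: std_switch_vadd std_switch_singleton)
qed

lemma odd_sum_parity_cong:
  fixes f g :: "'a \<Rightarrow> nat"
  shows "finite A \<Longrightarrow> (\<And>x. x \<in> A \<Longrightarrow> odd (f x) = odd (g x)) \<Longrightarrow> odd (sum f A) = odd (sum g A)"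
  by (induct A rule: finite_induct) auto

lemma std_switch_vadd_left:
  assumes "finite w"
  shows "std_switch (vadd a b) w = (std_switch a w \<noteq> std_switch b w)"
proof -
  have "odd (\<Sum>j\<in>w. card (vadd a b \<inter> {..<j}))
        = odd (\<Sum>j\<in>w. card (a \<inter> {..<j}) + card (b \<inter> {..<j}))"
    using assms by (rule odd_sum_parity_cong) (simp add: vadd_Int odd_card_vadd)
  then show ?thesis
    unfolding std_switch_def by (simp add: sum.distrib)
qed

lemma std_switch_singleton_left:
  assumes "finite w"
  shows "std_switch {i} w = odd (card (w \<inter> {i<..}))"
proof -
  have "(\<Sum>j\<in>w. card ({i} \<inter> {..<j})) = (\<Sum>j\<in>w. if j \<in> {i<..} then 1 else 0)"
    by (intro sum.cong) auto
  also have "\<dots> = card (w \<inter> {i<..})"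
    using assms by (simp add: sum.If_cases greaterThan_def)
  finally show ?thesis
    by (simp add: std_switch_def)
qed

lemma card_split_at:
  fixes w :: "nat set"
  assumes "finite w"
  shows "card w = card (w \<inter> {..<i}) + card (w \<inter> {i<..}) + (if i \<in> w then 1 else 0)"
proof -
  have w: "w = (w \<inter> {..<i}) \<union> (w \<inter> {i<..}) \<union> (w \<inter> {i})"
    by (auto simp: not_less le_less)
  have "card w = card ((w \<inter> {..<i}) \<union> (w \<inter> {i<..})) + card (w \<inter> {i})"
    by (subst w, rule card_Un_disjoint) (use assms in auto)
  also have "card ((w \<inter> {..<i}) \<union> (w \<inter> {i<..})) = card (w \<inter> {..<i}) + card (w \<inter> {i<..})"
    by (rule card_Un_disjoint) (use assms in auto)
  finally show ?thesis
    by auto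
qed

lemma std_switch_swap:
  assumes "finite a" "finite w" "even (card w)"
  shows "(std_switch w a \<noteq> std_switch a w) = vinner a w"
  using assms(1)
proof (induct a rule: finite_induct)
  case (insert i a)
  have ia: "insert i a = vadd a {i}"
    using insert.hyps(2) by (simp add: vadd_insert)
  have "(std_dashing w i \<noteq> odd (card (w \<inter> {i<..}))) = (i \<in> w)"
    using card_split_at[OF assms(2), of i] assms(3)
    by (cases "i \<in> w") (auto simp: std_dashing_def)
  then show ?case
    unfolding ia using insert.hyps(1,3) assms(2)
    by (auto simp add: std_switch_vadd std_switch_singleton std_switch_vadd_left
        std_switch_singleton_left vinner_vadd_left vinner_singleton)
qed (simp add: std_switch_def)

lemma potential_vadd_period:
  assumes g: "cube_primitive N (\<lambda>x i. P x i \<noteq> std_dashing x i) g"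
    and per: "\<forall>x. P (vadd x w) = P x" and w: "w \<subseteq> {..<N}" and y: "y \<subseteq> {..<N}"
  shows "(g (vadd y w) \<noteq> g y) = ((g w \<noteq> g {}) \<noteq> std_switch w y)"
proof -
  have "cube_primitive N (\<lambda>_. std_dashing w) (\<lambda>x. g (vadd x w) \<noteq> g x)"
    using cube_primitive_xor[OF cube_primitive_translate[OF g w] g]
    by (rule cube_primitive_cong[rotated]) (auto simp: per std_dashing_vadd)
  from cube_primitive_unique[OF this cube_primitive_std_switch y] show ?thesis
    by auto
qed

lemma translation_switching:
  assumes g: "cube_primitive N (\<lambda>x i. P x i \<noteq> std_dashing x i) g"
    and per: "\<forall>w\<in>C. \<forall>x. P (vadd x w) = P x"
    and C: "C \<subseteq> Pow {..<N}" "\<forall>w\<in>C. even (card w)"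
    and a: "a \<subseteq> {..<N}" "\<forall>w\<in>C. \<not> vinner a w"
  obtains F where "cube_primitive N (\<lambda>x i. P (vadd x a) i \<noteq> P x i) F"
    "\<forall>w\<in>C. \<forall>x\<subseteq>{..<N}. F (vadd x w) = F x"
proof
  define F where "F x = ((g (vadd x a) \<noteq> g x) \<noteq> std_switch a x)" for x
  show F: "cube_primitive N (\<lambda>x i. P (vadd x a) i \<noteq> P x i) F"
    using cube_primitive_xor[OF cube_primitive_xor[OF cube_primitive_translate[OF g a(1)] g]
        cube_primitive_std_switch]
    unfolding F_def by (rule cube_primitive_cong[rotated]) (auto simp: std_dashing_vadd)
  show "\<forall>w\<in>C. \<forall>x\<subseteq>{..<N}. F (vadd x w) = F x"
  proof (intro ballI allI impI)
    fix w x assume w: "w \<in> C" and x: "x \<subseteq> {..<N}"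
    have wN: "w \<subseteq> {..<N}"
      using w C(1) by blast
    have "P (vadd (vadd y w) a) = P (vadd y a)" for y
    proof -
      have "vadd (vadd y w) a = vadd (vadd y a) w"
        by (auto simp: vadd_def)
      then show ?thesis
        using per w by simp
    qed
    moreover have "P (vadd y w) = P y" for y
      using per w by simp
    ultimately have "cube_primitive N (\<lambda>x i. P (vadd x a) i \<noteq> P x i) (\<lambda>x. F (vadd x w))"
      using cube_primitive_translate[OF F wN] by simp
    from cube_primitive_unique[OF this F x]
    have "(F (vadd x w) \<noteq> F x) = (F w \<noteq> F {})"
      by simp
    moreover have "(g (vadd a w) \<noteq> g a) = ((g w \<noteq> g {}) \<noteq> std_switch w a)"
      using potential_vadd_period[OF g _ wN a(1)] per w by blast
    moreover have "(std_switch w a \<noteq> std_switch a w) = vinner a w"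
      using a(1) wN C(2) w by (intro std_switch_swap) (auto intro: finite_subset)
    ultimately show "F (vadd x w) = F x"
      using a(2) w by (auto simp: F_def vadd_comm)
  qed
qed

section \<open>Translations of the quotient\<close>

definition qtranslate :: "nat set \<Rightarrow> nat set set \<Rightarrow> nat set set" where
  "qtranslate a u = (\<lambda>y. vadd y a) ` u"

lemma qtranslate_qtranslate [simp]: "qtranslate a (qtranslate a u) = u"
  unfolding qtranslate_def image_image by simp

lemma qtranslate_coset: "qtranslate a (coset C x) = coset C (vadd x a)"
  unfolding qtranslate_def coset_def image_image by (intro image_cong refl) (auto simp: vadd_def)

lemma nbr_coset: "nbr (coset C x) i = coset C (vadd x {i})"
  unfolding nbr_def coset_def image_image by (intro image_cong refl) (auto simp: vadd_def)

lemma qtranslate_nbr: "qtranslate a (nbr u i) = nbr (qtranslate a u) i"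
  unfolding nbr_def qtranslate_def image_image by (intro image_cong refl) (auto simp: vadd_def)

lemma coset_in_qverts: "x \<subseteq> {..<N} \<Longrightarrow> coset C x \<in> qverts N C"
  by (simp add: qverts_def)

lemma coset_vadd_codeword:
  assumes closed: "\<forall>a\<in>C. \<forall>b\<in>C. vadd a b \<in> C" and w: "w \<in> C"
  shows "coset C (vadd x w) = coset C x"
proof -
  have "vadd w ` C \<subseteq> C"
    using closed w by blast
  moreover have "C \<subseteq> vadd w ` C"
  proof
    fix c assume "c \<in> C"
    then have "vadd w c \<in> C" "c = vadd w (vadd w c)"
      using closed w by (auto simp: vadd_def)
    then show "c \<in> vadd w ` C"
      by blast
  qed
  ultimately have "vadd w ` C = C"
    by blast
  then have "(\<lambda>c. vadd x (vadd w c)) ` C = (\<lambda>c. vadd x c) ` C"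
    by (metis image_image)
  then show ?thesis
    unfolding coset_def by (simp add: vadd_assoc)
qed

lemma coset_eq_imp_vadd:
  assumes "{} \<in> C" "coset C x = coset C y"
  shows "\<exists>w\<in>C. y = vadd x w"
proof -
  have "y \<in> coset C y"
    unfolding coset_def using assms(1) by (metis image_eqI vadd_empty(1))
  then have "y \<in> coset C x"
    using assms(2) by simp
  then show ?thesis
    unfolding coset_def by auto
qed

lemma quotient_adinkra_potential:
  assumes "quotient_adinkra N C par hgt boson"
  defines "D \<equiv> \<lambda>x i. par (coset C x) i \<noteq> std_dashing x i"
  shows "cube_primitive N D (cube_potential D)"
proof (rule cube_primitive_cube_potential)
  have edge: "\<forall>u\<in>qverts N C. \<forall>i<N. par (nbr u i) i = par u i"
    and square: "\<forall>u\<in>qverts N C. \<forall>i<N. \<forall>j<N. i \<noteq> j \<longrightarrow>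
      odd (of_bool (par u i) + of_bool (par (nbr u i) j) + of_bool (par (nbr u j) i)
           + of_bool (par u j) :: nat)"
    using assms(1) unfolding quotient_adinkra_def by auto
  have odd_of_bool4: "odd (of_bool p + of_bool q + of_bool r + of_bool s :: nat)
      \<longleftrightarrow> ((p \<noteq> q) \<noteq> (r \<noteq> s))" for p q r s
    by (cases p; cases q; cases r; cases s) auto
  show "\<forall>y\<subseteq>{..<N}. \<forall>i<N. D (vadd y {i}) i = D y i"
  proof (intro allI impI)
    fix y i assume "y \<subseteq> {..<N}" "i < N"
    then have "par (coset C (vadd y {i})) i = par (coset C y) i"
      using edge coset_in_qverts by (metis nbr_coset)
    then show "D (vadd y {i}) i = D y i"
      by (simp add: D_def std_dashing_vadd std_dashing_singleton)
  qed
  show "\<forall>y\<subseteq>{..<N}. \<forall>i<N. \<forall>j<N. i \<noteq> j \<longrightarrow>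
      (D y i \<noteq> D (vadd y {i}) j) = (D (vadd y {j}) i \<noteq> D y j)"
  proof (intro allI impI)
    fix y i j assume y: "y \<subseteq> {..<N}" and ij: "i < N" "j < N" "i \<noteq> j"
    have "(par (coset C y) i \<noteq> par (coset C (vadd y {i})) j)
        \<noteq> (par (coset C (vadd y {j})) i \<noteq> par (coset C y) j)"
      using square[rule_format, OF coset_in_qverts[OF y] ij] odd_of_bool4
      by (simp add: nbr_coset)
    moreover have "(j < i) = (\<not> i < j)"
      using ij(3) by auto
    ultimately show "(D y i \<noteq> D (vadd y {i}) j) = (D (vadd y {j}) i \<noteq> D y j)"
      by (auto simp: D_def std_dashing_vadd std_dashing_singleton)
  qed
qed

lemma qtranslate_in_qverts:
  assumes "a \<subseteq> {..<N}" "u \<in> qverts N C"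
  shows "qtranslate a u \<in> qverts N C"
proof -
  obtain x where "x \<subseteq> {..<N}" "u = coset C x"
    using assms(2) unfolding qverts_def by blast
  then show ?thesis
    using assms(1) by (simp add: qtranslate_coset coset_in_qverts vadd_subset)
qed

lemma bij_betw_qtranslate:
  "a \<subseteq> {..<N} \<Longrightarrow> bij_betw (qtranslate a) (qverts N C) (qverts N C)"
  by (rule bij_betw_byWitness[where f' = "qtranslate a"]) (auto intro: qtranslate_in_qverts)

lemma qedge_qtranslate_iff:
  assumes "a \<subseteq> {..<N}" "u \<in> qverts N C"
  shows "qedge N C (qtranslate a u) (qtranslate a v) i \<longleftrightarrow> qedge N C u v i"
proof -
  have "v = nbr u i \<longleftrightarrow> qtranslate a v = qtranslate a (nbr u i)"
    by (metis qtranslate_qtranslate)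
  then show ?thesis
    using assms qtranslate_in_qverts[OF assms] by (simp add: qedge_def qtranslate_nbr)
qed

text \<open>The switching set is the image in the quotient of the support of \<open>F\<close>, which is
well defined because \<open>F\<close> is \<open>C\<close>-periodic.\<close>

lemma aut_dvc_qtranslate:
  assumes C: "{} \<in> C" and a: "a \<subseteq> {..<N}"
    and F: "cube_primitive N (\<lambda>x i. par (coset C (vadd x a)) i \<noteq> par (coset C x) i) F"
    and F_period: "\<forall>w\<in>C. \<forall>x\<subseteq>{..<N}. F (vadd x w) = F x"
  shows "aut_dvc N C par (qtranslate a)"
proof -
  define S where "S = {coset C x | x. x \<subseteq> {..<N} \<and> F x}"
  have S_iff: "coset C x \<in> S \<longleftrightarrow> F x" if x: "x \<subseteq> {..<N}" for x
  proof
    assume "coset C x \<in> S"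
    then obtain y where y: "y \<subseteq> {..<N}" "coset C y = coset C x" "F y"
      by (auto simp: S_def)
    then obtain w where "w \<in> C" "x = vadd y w"
      using coset_eq_imp_vadd[OF C] by blast
    with y show "F x"
      using F_period by simp
  qed (use x in \<open>auto simp: S_def\<close>)
  have switching: "\<forall>u\<in>qverts N C. \<forall>i<N.
      par (qtranslate a u) i = (par u i \<noteq> ((u \<in> S) \<noteq> (nbr u i \<in> S)))"
  proof (intro ballI allI impI)
    fix u i assume u: "u \<in> qverts N C" and i: "i < N"
    obtain x where x: "x \<subseteq> {..<N}" "u = coset C x"
      using u unfolding qverts_def by blast
    have "vadd x {i} \<subseteq> {..<N}"
      using x(1) i by (intro vadd_subset) auto
    then have "(u \<in> S) \<noteq> (nbr u i \<in> S) \<longleftrightarrow> F x \<noteq> F (vadd x {i})"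
      using S_iff x by (simp add: nbr_coset)
    then show "par (qtranslate a u) i = (par u i \<noteq> ((u \<in> S) \<noteq> (nbr u i \<in> S)))"
      using cube_primitiveD[OF F x(1) i] x(2) by (auto simp: qtranslate_coset)
  qed
  have "S \<subseteq> qverts N C"
    by (auto simp: S_def coset_in_qverts)
  with switching have "\<exists>S \<subseteq> qverts N C. \<forall>u\<in>qverts N C. \<forall>i<N.
      par (qtranslate a u) i = (par u i \<noteq> ((u \<in> S) \<noteq> (nbr u i \<in> S)))"
    by (intro exI[of _ S] conjI)
  moreover have "\<forall>u\<in>qverts N C. \<forall>v\<in>qverts N C. \<forall>i.
      qedge N C u v i \<longleftrightarrow> qedge N C (qtranslate a u) (qtranslate a v) i"
    using qedge_qtranslate_iff[OF a] by simp
  ultimately show ?thesis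
    using bij_betw_qtranslate[OF a] unfolding aut_dvc_def by (intro conjI)
qed

lemma aut_dvc_qtranslate_dual:
  assumes code: "doubly_even_code N k C" and adinkra: "quotient_adinkra N C par hgt boson"
    and a: "a \<subseteq> {..<N}" "\<forall>w\<in>C. \<not> vinner a w"
  shows "aut_dvc N C par (qtranslate a)"
proof -
  have C: "C \<subseteq> Pow {..<N}" "{} \<in> C" "\<forall>a\<in>C. \<forall>b\<in>C. vadd a b \<in> C"
    "\<forall>w\<in>C. card w mod 4 = 0"
    using code unfolding doubly_even_code_def by auto
  have C_even: "\<forall>w\<in>C. even (card w)"
  proof
    fix w assume "w \<in> C"
    then have "card w mod 4 = 0"
      using C(4) by blast
    then show "even (card w)"
      by presburger
  qed
  define P where "P x = par (coset C x)" for x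
  have "\<forall>w\<in>C. \<forall>x. P (vadd x w) = P x"
    using C(3) by (simp add: P_def coset_vadd_codeword[OF C(3)])
  then obtain F where "cube_primitive N (\<lambda>x i. P (vadd x a) i \<noteq> P x i) F"
    "\<forall>w\<in>C. \<forall>x\<subseteq>{..<N}. F (vadd x w) = F x"
    using translation_switching[OF quotient_adinkra_potential[OF adinkra] _ C(1) C_even a]
    unfolding P_def by blast
  then show ?thesis
    using aut_dvc_qtranslate[OF C(2) a(1)] unfolding P_def by blast
qed

lemma coset_vadd_dual_in_aut_orbit:
  assumes "doubly_even_code N k C" "quotient_adinkra N C par hgt boson"
    and "a \<subseteq> {..<N}" "\<forall>w\<in>C. \<not> vinner a w"
  shows "coset C (vadd x a) \<in> aut_orbit N C par (coset C x)"
proof -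
  have "qtranslate a (coset C x) \<in> aut_orbit N C par (coset C x)"
    unfolding aut_orbit_def using aut_dvc_qtranslate_dual[OF assms]
    by (intro CollectI exI[of _ "qtranslate a"]) simp
  then show ?thesis
    by (simp add: qtranslate_coset)
qed

theorem mainTheorem6:
  fixes N k :: nat and C :: "nat set set"
    and par :: "nat set set \<Rightarrow> nat \<Rightarrow> bool" and hgt :: "nat set set \<Rightarrow> int"
    and boson :: "nat set set \<Rightarrow> bool"
    and \<phi> :: "nat set set set" and c :: "nat set"
  assumes "doubly_even_code N k C"
    and "quotient_adinkra N C par hgt boson"
    and "\<exists>u0 \<in> qverts N C. \<phi> = aut_orbit N C par u0"
    and "c \<subseteq> {..<N}"
    and "\<exists>b. \<forall>x. x \<subseteq> {..<N} \<and> coset C x \<in> \<phi> \<longrightarrow> vinner x c = b"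
  shows "c \<in> C"
proof (rule ccontr)
  assume c: "c \<notin> C"
  have C: "C \<subseteq> Pow {..<N}" "{} \<in> C" "\<forall>a\<in>C. \<forall>b\<in>C. vadd a b \<in> C"
    using assms(1) by (auto simp: doubly_even_code_def)
  obtain a where a: "a \<subseteq> {..<N}" "\<forall>w\<in>C. \<not> vinner a w" "vinner a c"
    using exists_dual_not_orthogonal[OF finite_lessThan C assms(4) c] by blast
  obtain x0 where x0: "x0 \<subseteq> {..<N}" "\<phi> = aut_orbit N C par (coset C x0)"
    using assms(3) by (auto simp: qverts_def)
  obtain b where b: "\<forall>x. x \<subseteq> {..<N} \<and> coset C x \<in> \<phi> \<longrightarrow> vinner x c = b"
    using assms(5) ..
  have "vinner x0 c = b"
    using b x0 coset_vadd_dual_in_aut_orbit[OF assms(1,2), of "{}" x0] by simp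
  moreover have "vinner (vadd x0 a) c = b"
    using b x0 vadd_subset[OF x0(1) a(1)] coset_vadd_dual_in_aut_orbit[OF assms(1,2) a(1,2)]
    by blast
  moreover have "vinner (vadd x0 a) c = (vinner x0 c \<noteq> vinner a c)"
    using finite_subset[OF x0(1) finite_lessThan] finite_subset[OF a(1) finite_lessThan]
    by (rule vinner_vadd_left)
  ultimately show False
    using a(3) by simp
qed

end
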